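(* A Banach space $X$ contains no (isomorphic) copy of $c_0$ if and only if for each series $\sum x_n$ in $X$ which is not unconditionally convergent both sets $E=\left\{s \in S : \left(\sum_{i=1}^n x_{s(i)}\right)_n \text{ is bounded}\right\}$ and $F=\left\{p \in P : \left(\sum_{i=1}^n x_{p(i)}\right)_n \text{ is bounded}\right\}$ are meager in $S$ and $P$, respectively.
   Context: $S=\{s\in\mathbb{N}^{\mathbb{N}} : s \text{ strictly increasing}\}$ and $P=\{p\in\mathbb{N}^{\mathbb{N}} : p \text{ a bijection of }\mathbb{N}\}$, with the subspace topology of $\mathbb{N}^{\mathbb{N}}$ (product of discrete spaces). *)

theory Defs
  imports "HOL-Analysis.Analysis"
begin

definition c0_space :: "(nat \<Rightarrow> real) set" where
  "c0_space = {a. a \<longlonglongrightarrow> 0}"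

definition sup_norm :: "(nat \<Rightarrow> real) \<Rightarrow> real" where
  "sup_norm a = (SUP n. \<bar>a n\<bar>)"

text \<open>X contains an isomorphic copy of c_0: there is a linear map T from c_0 into X
  which is an isomorphism onto its range (bounded and bounded below).\<close>
definition contains_copy_of_c0 :: "'a::real_normed_vector itself \<Rightarrow> bool" where
  "contains_copy_of_c0 _ \<longleftrightarrow>
     (\<exists>T :: (nat \<Rightarrow> real) \<Rightarrow> 'a.
        (\<forall>a\<in>c0_space. \<forall>b\<in>c0_space. T (\<lambda>n. a n + b n) = T a + T b) \<and>
        (\<forall>c. \<forall>a\<in>c0_space. T (\<lambda>n. c * a n) = c *\<^sub>R T a) \<and>
        (\<exists>m M. 0 < m \<and> (\<forall>a\<in>c0_space. m * sup_norm a \<le> norm (T a) \<and> norm (T a) \<le> M * sup_norm a)))"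

definition unconditionally_convergent :: "(nat \<Rightarrow> 'a::real_normed_vector) \<Rightarrow> bool" where
  "unconditionally_convergent x \<longleftrightarrow> (\<forall>p. bij p \<longrightarrow> summable (\<lambda>n. x (p n)))"

definition nowhere_dense_in :: "'a topology \<Rightarrow> 'a set \<Rightarrow> bool" where
  "nowhere_dense_in T A \<longleftrightarrow> A \<subseteq> topspace T \<and> T interior_of (T closure_of A) = {}"

definition meager_in :: "'a topology \<Rightarrow> 'a set \<Rightarrow> bool" where
  "meager_in T A \<longleftrightarrow> A \<subseteq> topspace T \<and>
     (\<exists>\<F>. countable \<F> \<and> (\<forall>N\<in>\<F>. nowhere_dense_in T N) \<and> A \<subseteq> \<Union>\<F>)"

definition baire_space :: "(nat \<Rightarrow> nat) topology" where
  "baire_space = product_topology (\<lambda>_. discrete_topology UNIV) UNIV"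

definition incr_seqs :: "(nat \<Rightarrow> nat) set" where
  "incr_seqs = {s. strict_mono s}"

definition perms :: "(nat \<Rightarrow> nat) set" where
  "perms = {p. bij p}"

end

theory Submission
  imports Defs
begin

text \<open>
  Suppose \<open>X\<close> contains no copy of \<open>c\<^sub>0\<close> and \<open>\<Sum> x\<^sub>n\<close> is not unconditionally convergent. Then the
  finite sums of \<open>x\<close> over index sets beyond any \<open>L\<close> are unbounded. Otherwise, as some rearrangement
  violates the Cauchy criterion, there are disjoint finite blocks \<open>B\<^sub>n\<close> beyond \<open>L\<close> with
  \<open>norm (\<Sum>i\<in>B\<^sub>n. x i) \<ge> e\<close>, and the block sums \<open>y\<^sub>n\<close> have uniformly bounded finite subsums. A
  Bessaga-Pelczynski argument turns such a sequence into a copy of \<open>c\<^sub>0\<close>: by a counting argument,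
  adding a multiple of a far-out \<open>y\<^sub>k\<close> to a bounded combination of \<open>y\<^sub>0, \<dots>, y\<^sub>m\<close> lowers its norm
  only slightly, so along a suitable subsequence \<open>r\<close> the partial sums of \<open>\<Sum>i. a i *\<^sub>R y (r i)\<close>
  are almost increasing in norm, and \<open>sup\<^sub>i \<bar>a i\<bar>\<close> is controlled by the norm of the sum.

  With unbounded tail subsums, the set of \<open>s \<in> S\<close> (or \<open>p \<in> P\<close>) whose partial sums stay below \<open>M\<close> is
  closed, and it has empty interior because every cylinder contains a sequence that, right after
  its prescribed initial segment, runs through a far-out finite index set with a large sum. Hence
  \<open>E\<close> and \<open>F\<close> are countable unions of nowhere dense sets.

  Conversely, if \<open>T\<close> embeds \<open>c\<^sub>0\<close>, the vectors \<open>x\<^sub>n = T e\<^sub>n\<close> have norms bounded below but uniformly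
  bounded finite sums, so \<open>\<Sum> x\<^sub>n\<close> diverges while \<open>E = S\<close>; and \<open>S\<close> is not meager by the Baire
  category theorem, being closed in the completely metrizable space \<open>\<nat>\<^sup>\<nat>\<close>.
\<close>

section \<open>Sequences with bounded finite subsums\<close>

lemma exists_sign_norm_add_scaleR_ge:
  fixes u v :: "'a::real_normed_vector"
  assumes "\<bar>c\<bar> \<le> 1"
  obtains e :: real where "e = 1 \<or> e = -1" and "norm (v + c *\<^sub>R u) \<le> norm (v + e *\<^sub>R u)"
proof -
  have "((1 + c) / 2) *\<^sub>R (v + u) + ((1 - c) / 2) *\<^sub>R (v - u)
      = ((1 + c) / 2 + (1 - c) / 2) *\<^sub>R v + ((1 + c) / 2 - (1 - c) / 2) *\<^sub>R u"
    by (simp add: algebra_simps)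
  then have "v + c *\<^sub>R u = ((1 + c) / 2) *\<^sub>R (v + u) + ((1 - c) / 2) *\<^sub>R (v - u)"
    by (simp add: field_simps)
  then have "norm (v + c *\<^sub>R u) \<le> ((1 + c) / 2) * norm (v + u) + ((1 - c) / 2) * norm (v - u)"
    using assms norm_triangle_ineq[of "((1 + c) / 2) *\<^sub>R (v + u)" "((1 - c) / 2) *\<^sub>R (v - u)"]
    by simp
  also have "\<dots> \<le> max (norm (v + u)) (norm (v + (-1) *\<^sub>R u))"
    using assms by (intro convex_bound_le) (auto simp: field_simps abs_le_iff)
  finally show ?thesis
    using that[of 1] that[of "-1"] by (auto simp: max_def split: if_splits)
qed

lemma exists_signs_norm_sum_ge:
  fixes y :: "nat \<Rightarrow> 'a::real_normed_vector"
  assumes "finite A" and "\<forall>i\<in>A. \<bar>c i\<bar> \<le> 1"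
  shows "\<exists>\<sigma>. (\<forall>i\<in>A. \<sigma> i = 1 \<or> \<sigma> i = -1) \<and>
           norm (w + (\<Sum>i\<in>A. c i *\<^sub>R y i)) \<le> norm (w + (\<Sum>i\<in>A. \<sigma> i *\<^sub>R y i))"
  using assms
proof (induction A arbitrary: w rule: finite_induct)
  case empty
  then show ?case by auto
next
  case (insert j A)
  obtain \<sigma> where \<sigma>: "\<forall>i\<in>A. \<sigma> i = 1 \<or> \<sigma> i = -1"
    and le_\<sigma>: "norm ((w + c j *\<^sub>R y j) + (\<Sum>i\<in>A. c i *\<^sub>R y i))
                \<le> norm ((w + c j *\<^sub>R y j) + (\<Sum>i\<in>A. \<sigma> i *\<^sub>R y i))"
    using insert.IH[of "w + c j *\<^sub>R y j"] insert.prems by auto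
  define v where "v = w + (\<Sum>i\<in>A. \<sigma> i *\<^sub>R y i)"
  obtain e where e: "e = 1 \<or> e = -1" and le_e: "norm (v + c j *\<^sub>R y j) \<le> norm (v + e *\<^sub>R y j)"
    using exists_sign_norm_add_scaleR_ge[of "c j" v "y j"] insert.prems by auto
  define \<tau> where "\<tau> = \<sigma>(j := e)"
  have sum_\<tau>: "(\<Sum>i\<in>A. \<tau> i *\<^sub>R y i) = (\<Sum>i\<in>A. \<sigma> i *\<^sub>R y i)"
    using insert.hyps by (intro sum.cong) (auto simp: \<tau>_def)
  have "norm (w + (\<Sum>i\<in>insert j A. c i *\<^sub>R y i)) = norm ((w + c j *\<^sub>R y j) + (\<Sum>i\<in>A. c i *\<^sub>R y i))"
    using insert.hyps by (simp add: algebra_simps)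
  also have "\<dots> \<le> norm (v + c j *\<^sub>R y j)"
    using le_\<sigma> by (simp add: v_def algebra_simps)
  also have "\<dots> \<le> norm (v + e *\<^sub>R y j)"
    by (rule le_e)
  also have "\<dots> = norm (w + (\<Sum>i\<in>insert j A. \<tau> i *\<^sub>R y i))"
    using insert.hyps sum_\<tau> by (simp add: v_def \<tau>_def algebra_simps)
  finally have "norm (w + (\<Sum>i\<in>insert j A. c i *\<^sub>R y i)) \<le> norm (w + (\<Sum>i\<in>insert j A. \<tau> i *\<^sub>R y i))" .
  moreover have "\<forall>i\<in>insert j A. \<tau> i = 1 \<or> \<tau> i = -1"
    using \<sigma> e by (simp add: \<tau>_def)
  ultimately show ?case
    by blast
qed

lemma norm_sum_signs_le:
  fixes y :: "nat \<Rightarrow> 'a::real_normed_vector"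
  assumes subsums: "\<And>B. finite B \<Longrightarrow> norm (sum y B) \<le> C"
    and "finite A" and "\<forall>i\<in>A. \<sigma> i = 1 \<or> \<sigma> i = -1"
  shows "norm (\<Sum>i\<in>A. \<sigma> i *\<^sub>R y i) \<le> 2 * C"
proof -
  define P where "P = {i\<in>A. \<sigma> i = 1}"
  define N where "N = {i\<in>A. \<sigma> i \<noteq> 1}"
  have "finite P" "finite N"
    using \<open>finite A\<close> by (auto simp: P_def N_def)
  have "A = P \<union> N" "P \<inter> N = {}"
    by (auto simp: P_def N_def)
  then have "(\<Sum>i\<in>A. \<sigma> i *\<^sub>R y i) = (\<Sum>i\<in>P. \<sigma> i *\<^sub>R y i) + (\<Sum>i\<in>N. \<sigma> i *\<^sub>R y i)"
    using sum.union_disjoint[OF \<open>finite P\<close> \<open>finite N\<close>] by simp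
  also have "(\<Sum>i\<in>P. \<sigma> i *\<^sub>R y i) = sum y P"
    by (rule sum.cong) (auto simp: P_def)
  also have "(\<Sum>i\<in>N. \<sigma> i *\<^sub>R y i) = (\<Sum>i\<in>N. - y i)"
    using assms(3) by (intro sum.cong) (auto simp: N_def)
  also have "sum y P + (\<Sum>i\<in>N. - y i) = sum y P - sum y N"
    by (simp add: sum_negf)
  finally have "norm (\<Sum>i\<in>A. \<sigma> i *\<^sub>R y i) \<le> norm (sum y P) + norm (sum y N)"
    by (simp only: norm_triangle_ineq4)
  also have "\<dots> \<le> 2 * C"
    using subsums[OF \<open>finite P\<close>] subsums[OF \<open>finite N\<close>] by simp
  finally show ?thesis .
qed

lemma norm_sum_scaleR_le_bounded_subsums:
  fixes y :: "nat \<Rightarrow> 'a::real_normed_vector"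
  assumes subsums: "\<And>B. finite B \<Longrightarrow> norm (sum y B) \<le> C"
    and "finite A" and c: "\<forall>i\<in>A. \<bar>c i\<bar> \<le> K" and "0 \<le> K"
  shows "norm (\<Sum>i\<in>A. c i *\<^sub>R y i) \<le> 2 * C * K"
proof (cases "K = 0")
  case True
  then have "\<forall>i\<in>A. c i = 0"
    using c by auto
  then show ?thesis
    using True by simp
next
  case False
  then have "K > 0" using \<open>0 \<le> K\<close> by simp
  have "\<forall>i\<in>A. \<bar>c i / K\<bar> \<le> 1"
    using c \<open>K > 0\<close> by (simp add: abs_divide)
  from exists_signs_norm_sum_ge[OF \<open>finite A\<close> this, where w = 0 and y = y]
  obtain \<sigma> where \<sigma>: "\<forall>i\<in>A. \<sigma> i = 1 \<or> \<sigma> i = -1"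
    and le: "norm (\<Sum>i\<in>A. (c i / K) *\<^sub>R y i) \<le> norm (\<Sum>i\<in>A. \<sigma> i *\<^sub>R y i)"
    by auto
  have "(\<Sum>i\<in>A. c i *\<^sub>R y i) = K *\<^sub>R (\<Sum>i\<in>A. (c i / K) *\<^sub>R y i)"
    using \<open>K > 0\<close> by (simp add: scaleR_sum_right)
  then have "norm (\<Sum>i\<in>A. c i *\<^sub>R y i) = K * norm (\<Sum>i\<in>A. (c i / K) *\<^sub>R y i)"
    using \<open>K > 0\<close> by simp
  also have "\<dots> \<le> K * (2 * C)"
    using le norm_sum_signs_le[OF subsums \<open>finite A\<close> \<sigma>] \<open>K > 0\<close> by (intro mult_left_mono) auto
  finally show ?thesis by (simp add: algebra_simps)
qed

section \<open>Adding far-out terms barely shrinks a combination\<close>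

lemma card_norm_drop_indices_le:
  fixes y :: "nat \<Rightarrow> 'a::real_normed_vector"
  assumes subsums: "\<And>B. finite B \<Longrightarrow> norm (sum y B) \<le> C"
    and "finite G" and drop: "\<forall>k\<in>G. norm (u + t k *\<^sub>R y k) < norm u - \<eta>"
    and t_le: "\<forall>k\<in>G. \<bar>t k\<bar> \<le> T" and "0 \<le> T"
  shows "real (card G) * \<eta> \<le> 2 * C * T"
proof -
  have "real (card G) * norm u \<le> norm (\<Sum>k\<in>G. u + t k *\<^sub>R y k) + norm (\<Sum>k\<in>G. t k *\<^sub>R y k)"
    using norm_triangle_ineq4[of "\<Sum>k\<in>G. u + t k *\<^sub>R y k" "\<Sum>k\<in>G. t k *\<^sub>R y k"]
    by (simp add: sum_subtractf[symmetric] sum_constant_scaleR)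
  moreover have "norm (\<Sum>k\<in>G. u + t k *\<^sub>R y k) \<le> (\<Sum>k\<in>G. norm u - \<eta>)"
    using drop by (intro order_trans[OF norm_sum] sum_mono) (simp add: less_imp_le)
  moreover have "norm (\<Sum>k\<in>G. t k *\<^sub>R y k) \<le> 2 * C * T"
    using t_le \<open>0 \<le> T\<close> by (intro norm_sum_scaleR_le_bounded_subsums[OF subsums \<open>finite G\<close>])
  moreover have "(\<Sum>k\<in>G. norm u - \<eta>) = real (card G) * norm u - real (card G) * \<eta>"
    by (simp add: algebra_simps)
  ultimately show ?thesis
    by linarith
qed

lemma finite_norm_drop_indices:
  fixes y :: "nat \<Rightarrow> 'a::real_normed_vector"
  assumes subsums: "\<And>B. finite B \<Longrightarrow> norm (sum y B) \<le> C"
    and "\<epsilon> > 0" and y_ge: "\<And>k. \<epsilon> \<le> norm (y k)" and "\<eta> > 0"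
  shows "finite {k. \<exists>t. norm (u + t *\<^sub>R y k) < norm u - \<eta>}"
proof -
  define T where "T = 2 * norm u / \<epsilon>"
  have "0 \<le> T"
    using \<open>\<epsilon> > 0\<close> by (simp add: T_def)
  have t_le: "\<bar>t\<bar> \<le> T" if "norm (u + t *\<^sub>R y k) < norm u - \<eta>" for k t
  proof -
    have "\<bar>t\<bar> * \<epsilon> \<le> norm (t *\<^sub>R y k)"
      using y_ge[of k] by (simp add: mult_left_mono)
    also have "\<dots> \<le> norm (u + t *\<^sub>R y k) + norm u"
      using norm_triangle_ineq4[of "u + t *\<^sub>R y k" u] by simp
    also have "\<dots> \<le> 2 * norm u"
      using that \<open>\<eta> > 0\<close> by simp
    finally show ?thesis
      using \<open>\<epsilon> > 0\<close> by (simp add: T_def pos_le_divide_eq)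
  qed
  have "card G \<le> nat \<lceil>2 * C * T / \<eta>\<rceil>"
    if G: "G \<subseteq> {k. \<exists>t. norm (u + t *\<^sub>R y k) < norm u - \<eta>}" "finite G" for G
  proof -
    have "\<forall>k\<in>G. \<exists>t. norm (u + t *\<^sub>R y k) < norm u - \<eta>"
      using G(1) by blast
    then obtain t where t: "\<forall>k\<in>G. norm (u + t k *\<^sub>R y k) < norm u - \<eta>"
      by (rule bchoice[elim_format]) blast
    then have "real (card G) * \<eta> \<le> 2 * C * T"
      using t_le \<open>0 \<le> T\<close> by (intro card_norm_drop_indices_le[OF subsums G(2)]) auto
    then have "real (card G) \<le> 2 * C * T / \<eta>"
      using \<open>\<eta> > 0\<close> by (simp add: pos_le_divide_eq)
    then show ?thesis
      by linarith
  qed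
  then have "finite {k. \<exists>t. norm (u + t *\<^sub>R y k) < norm u - \<eta>}
      \<and> card {k. \<exists>t. norm (u + t *\<^sub>R y k) < norm u - \<eta>} \<le> nat \<lceil>2 * C * T / \<eta>\<rceil>"
    by (rule finite_if_finite_subsets_card_bdd)
  then show ?thesis ..
qed

lemma finite_net_of_cube:
  fixes h :: real
  assumes "h > 0"
  obtains G :: "(nat \<Rightarrow> real) set" where "finite G"
    and "\<And>b. \<forall>j\<le>m. \<bar>b j\<bar> \<le> 1 \<Longrightarrow> \<exists>g\<in>G. \<forall>j\<le>m. \<bar>b j - g j\<bar> \<le> h"
proof -
  define N where "N = \<lceil>1 / h\<rceil>"
  define G where "G = (\<lambda>q j. h * of_int (q j)) ` PiE {..m} (\<lambda>_. {-N..N})"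
  have "finite G"
    by (simp add: G_def finite_PiE)
  moreover have "\<exists>g\<in>G. \<forall>j\<le>m. \<bar>b j - g j\<bar> \<le> h" if b: "\<forall>j\<le>m. \<bar>b j\<bar> \<le> 1" for b
  proof -
    define q where "q = restrict (\<lambda>j. \<lfloor>b j / h\<rfloor>) {..m}"
    have q: "q j = \<lfloor>b j / h\<rfloor>" if "j \<le> m" for j
      using that by (simp add: q_def)
    have "q j \<in> {-N..N}" if "j \<le> m" for j
    proof -
      have "- (1 / h) \<le> b j / h" "b j / h \<le> 1 / h"
        using b that \<open>h > 0\<close> by (auto simp: abs_le_iff field_simps)
      then have "\<lfloor>- (1 / h)\<rfloor> \<le> \<lfloor>b j / h\<rfloor>" "\<lfloor>b j / h\<rfloor> \<le> \<lfloor>1 / h\<rfloor>"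
        by (simp_all only: floor_mono)
      then show ?thesis
        using floor_le_ceiling[of "1 / h"] by (simp add: q[OF that] N_def ceiling_def)
    qed
    then have "q \<in> PiE {..m} (\<lambda>_. {-N..N})"
      by (simp add: q_def)
    moreover have "\<bar>b j - h * of_int (q j)\<bar> \<le> h" if "j \<le> m" for j
    proof -
      have "of_int \<lfloor>b j / h\<rfloor> * h \<le> b j" "b j < of_int \<lfloor>b j / h\<rfloor> * h + h"
        using floor_divide_lower[OF \<open>h > 0\<close>] floor_divide_upper[OF \<open>h > 0\<close>]
        by (simp_all add: distrib_right)
      then show ?thesis
        by (simp add: q[OF that] abs_le_iff mult.commute)
    qed
    ultimately show ?thesis
      unfolding G_def by (intro bexI[of _ "\<lambda>j. h * of_int (q j)"] imageI) auto
  qed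
  ultimately show ?thesis
    by (rule that)
qed

lemma norm_drop_perturb:
  fixes u v w :: "'a::real_normed_vector"
  assumes "norm u - e \<le> norm (u + v)"
  shows "norm w - (e + 2 * norm (w - u)) \<le> norm (w + v)"
proof -
  have "norm w \<le> norm u + norm (w - u)"
    using norm_triangle_ineq[of u "w - u"] by simp
  moreover have "norm (u + v) \<le> norm (w + v) + norm (w - u)"
    using norm_triangle_ineq4[of "w + v" "w - u"] by (simp add: algebra_simps)
  ultimately show ?thesis
    using assms by linarith
qed

lemma eventually_small_norm_drop_on_cube:
  fixes y :: "nat \<Rightarrow> 'a::real_normed_vector"
  assumes subsums: "\<And>B. finite B \<Longrightarrow> norm (sum y B) \<le> C"
    and "\<epsilon> > 0" and y_ge: "\<And>k. \<epsilon> \<le> norm (y k)" and "\<delta> > 0"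
  shows "\<exists>N. \<forall>k\<ge>N. \<forall>b t. (\<forall>j\<le>m. \<bar>b j\<bar> \<le> 1) \<longrightarrow>
           norm (\<Sum>j\<le>m. b j *\<^sub>R y j) - \<delta> \<le> norm ((\<Sum>j\<le>m. b j *\<^sub>R y j) + t *\<^sub>R y k)"
proof -
  define u where "u b = (\<Sum>j\<le>m. b j *\<^sub>R y j)" for b
  have "0 \<le> C"
    using subsums[of "{}"] by simp
  define h where "h = \<delta> / (8 * C + 1)"
  have "h > 0"
    using \<open>\<delta> > 0\<close> \<open>0 \<le> C\<close> by (simp add: h_def)
  have "4 * C * h \<le> \<delta> / 2"
    using \<open>\<delta> > 0\<close> \<open>0 \<le> C\<close> by (simp add: h_def field_simps)
  \<comment> \<open>Up to an error \<open>4 * C * h\<close>, a combination with coefficients in the cube is one of the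
    finitely many \<open>u g\<close>, and each of these has only finitely many bad indices.\<close>
  obtain G where "finite G" and net: "\<And>b. \<forall>j\<le>m. \<bar>b j\<bar> \<le> 1 \<Longrightarrow> \<exists>g\<in>G. \<forall>j\<le>m. \<bar>b j - g j\<bar> \<le> h"
    using finite_net_of_cube[OF \<open>h > 0\<close>] by blast
  have "finite (\<Union>g\<in>G. {k. \<exists>t. norm (u g + t *\<^sub>R y k) < norm (u g) - \<delta> / 2})"
    using \<open>finite G\<close> \<open>\<delta> > 0\<close> by (intro finite_UN_I finite_norm_drop_indices[OF subsums \<open>\<epsilon> > 0\<close> y_ge]) auto
  then obtain N where N: "(\<Union>g\<in>G. {k. \<exists>t. norm (u g + t *\<^sub>R y k) < norm (u g) - \<delta> / 2}) \<subseteq> {..<N}"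
    using finite_nat_bounded by blast
  have "norm (u b) - \<delta> \<le> norm (u b + t *\<^sub>R y k)"
    if "N \<le> k" and "\<forall>j\<le>m. \<bar>b j\<bar> \<le> 1" for k b t
  proof -
    obtain g where "g \<in> G" and g: "\<forall>j\<le>m. \<bar>b j - g j\<bar> \<le> h"
      using net \<open>\<forall>j\<le>m. \<bar>b j\<bar> \<le> 1\<close> by blast
    have "norm (u g) - \<delta> / 2 \<le> norm (u g + t *\<^sub>R y k)"
      using N \<open>g \<in> G\<close> \<open>N \<le> k\<close> by (force simp: not_less)
    then have "norm (u b) - (\<delta> / 2 + 2 * norm (u b - u g)) \<le> norm (u b + t *\<^sub>R y k)"
      by (rule norm_drop_perturb)
    moreover have "u b - u g = (\<Sum>j\<le>m. (b j - g j) *\<^sub>R y j)"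
      by (simp add: u_def scaleR_diff_left sum_subtractf)
    then have "norm (u b - u g) \<le> 2 * C * h"
      using g \<open>h > 0\<close> by (auto intro: norm_sum_scaleR_le_bounded_subsums[OF subsums])
    ultimately show ?thesis
      using \<open>4 * C * h \<le> \<delta> / 2\<close> by linarith
  qed
  then show ?thesis
    unfolding u_def by blast
qed

lemma eventually_small_norm_drop:
  fixes y :: "nat \<Rightarrow> 'a::real_normed_vector"
  assumes subsums: "\<And>B. finite B \<Longrightarrow> norm (sum y B) \<le> C"
    and "\<epsilon> > 0" and y_ge: "\<And>k. \<epsilon> \<le> norm (y k)" and "\<delta> > 0"
  shows "\<exists>N. \<forall>k\<ge>N. \<forall>M b t. (\<forall>j\<le>m. \<bar>b j\<bar> \<le> M) \<longrightarrow>
           norm (\<Sum>j\<le>m. b j *\<^sub>R y j) - \<delta> * M \<le> norm ((\<Sum>j\<le>m. b j *\<^sub>R y j) + t *\<^sub>R y k)"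
proof -
  obtain N where N: "\<forall>k\<ge>N. \<forall>b t. (\<forall>j\<le>m. \<bar>b j\<bar> \<le> 1) \<longrightarrow>
      norm (\<Sum>j\<le>m. b j *\<^sub>R y j) - \<delta> \<le> norm ((\<Sum>j\<le>m. b j *\<^sub>R y j) + t *\<^sub>R y k)"
    using eventually_small_norm_drop_on_cube[OF assms] by blast
  have "norm (\<Sum>j\<le>m. b j *\<^sub>R y j) - \<delta> * M \<le> norm ((\<Sum>j\<le>m. b j *\<^sub>R y j) + t *\<^sub>R y k)"
    if "N \<le> k" and b: "\<forall>j\<le>m. \<bar>b j\<bar> \<le> M" for k M b t
  proof (cases "M = 0")
    case True
    then have "\<forall>j\<in>{..m}. b j = 0"
      using b by auto
    then show ?thesis
      using True by simp
  next
    case False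
    then have "M > 0"
      using b[rule_format, of 0] by simp
    define U where "U = (\<Sum>j\<le>m. b j *\<^sub>R y j)"
    have "(\<Sum>j\<le>m. (b j / M) *\<^sub>R y j) = (1 / M) *\<^sub>R U"
      by (simp add: U_def scaleR_sum_right)
    moreover have "\<forall>j\<le>m. \<bar>b j / M\<bar> \<le> 1"
      using b \<open>M > 0\<close> by simp
    then have "norm (\<Sum>j\<le>m. (b j / M) *\<^sub>R y j) - \<delta>
        \<le> norm ((\<Sum>j\<le>m. (b j / M) *\<^sub>R y j) + (t / M) *\<^sub>R y k)"
      using N[rule_format, of k "\<lambda>j. b j / M" "t / M"] \<open>N \<le> k\<close> by blast
    ultimately have "norm ((1 / M) *\<^sub>R U) - \<delta> \<le> norm ((1 / M) *\<^sub>R U + (t / M) *\<^sub>R y k)"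
      by simp
    also have "(1 / M) *\<^sub>R U + (t / M) *\<^sub>R y k = (1 / M) *\<^sub>R (U + t *\<^sub>R y k)"
      by (simp add: scaleR_add_right)
    finally have "norm U / M - \<delta> \<le> norm (U + t *\<^sub>R y k) / M"
      using \<open>M > 0\<close> by simp
    then have "M * (norm U / M - \<delta>) \<le> M * (norm (U + t *\<^sub>R y k) / M)"
      using \<open>M > 0\<close> by (intro mult_left_mono) auto
    then show ?thesis
      using \<open>M > 0\<close> by (simp add: U_def right_diff_distrib mult.commute)
  qed
  then show ?thesis
    by blast
qed

section \<open>An isomorphic copy of \<open>c\<^sub>0\<close>\<close>

lemma sum_comp_strict_mono:
  fixes f :: "nat \<Rightarrow> 'a::comm_monoid_add" and r :: "nat \<Rightarrow> nat"
  assumes "strict_mono r" and "\<And>j. j \<notin> range r \<Longrightarrow> f j = 0"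
  shows "(\<Sum>i\<le>p. f (r i)) = (\<Sum>j\<le>r p. f j)"
proof -
  have "(\<Sum>i\<le>p. f (r i)) = sum f (r ` {..p})"
    by (simp add: sum.reindex[OF strict_mono_imp_inj_on[OF assms(1)]])
  also have "\<dots> = (\<Sum>j\<le>r p. f j)"
  proof (rule sum.mono_neutral_left)
    show "r ` {..p} \<subseteq> {..r p}"
      using assms(1) by (auto simp: strict_mono_less_eq)
    show "\<forall>j\<in>{..r p} - r ` {..p}. f j = 0"
    proof
      fix j assume "j \<in> {..r p} - r ` {..p}"
      then have "j \<notin> range r"
        using assms(1) by (auto simp: strict_mono_less_eq)
      then show "f j = 0"
        by (rule assms(2))
    qed
  qed simp
  finally show ?thesis .
qed

lemma le_add_of_geometric_drops:
  fixes s :: "nat \<Rightarrow> real"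
  assumes drop: "\<And>n. s n - K / 2 ^ n \<le> s (Suc n)" and "0 \<le> K" and "m \<le> n"
  shows "s m \<le> s n + 2 * K"
proof -
  have "s m \<le> s n + 2 * K - 2 * K / 2 ^ n"
    using \<open>m \<le> n\<close>
  proof (induction n rule: dec_induct)
    case base
    have "2 * K / 2 ^ m \<le> 2 * K / 1"
      using \<open>0 \<le> K\<close> by (intro divide_left_mono) auto
    then show ?case
      by simp
  next
    case (step n)
    moreover have "2 * K / 2 ^ Suc n = K / 2 ^ n"
      by simp
    ultimately show ?case
      using drop[of n] by linarith
  qed
  moreover have "0 \<le> 2 * K / 2 ^ n"
    using \<open>0 \<le> K\<close> by simp
  ultimately show ?thesis
    by linarith
qed

lemma exists_strict_mono_dominating:
  fixes N :: "nat \<Rightarrow> nat"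
  obtains r :: "nat \<Rightarrow> nat" where "strict_mono r" and "\<And>n. N (r n) \<le> r (Suc n)"
proof -
  have "\<exists>r'. x < r' \<and> N x \<le> r'" for x
    by (rule exI[of _ "Suc x + N x"]) simp
  then obtain r where "\<And>n. r n < r (Suc n)" "\<And>n. N (r n) \<le> r (Suc n)"
    using dependent_nat_choice[of "\<lambda>_ _. True" "\<lambda>_ x r'. x < r' \<and> N x \<le> r'"] by blast
  then show ?thesis
    using that strict_mono_Suc_iff by blast
qed

lemma exists_small_norm_drop_thresholds:
  fixes y :: "nat \<Rightarrow> 'a::real_normed_vector"
  assumes subsums: "\<And>B. finite B \<Longrightarrow> norm (sum y B) \<le> C"
    and "\<epsilon> > 0" and y_ge: "\<And>k. \<epsilon> \<le> norm (y k)" and "\<eta> > 0"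
  obtains N :: "nat \<Rightarrow> nat" where "\<And>m k M b t. N m \<le> k \<Longrightarrow> \<forall>j\<le>m. \<bar>b j\<bar> \<le> M \<Longrightarrow>
      norm (\<Sum>j\<le>m. b j *\<^sub>R y j) - \<eta> / 2 ^ Suc m * M \<le> norm ((\<Sum>j\<le>m. b j *\<^sub>R y j) + t *\<^sub>R y k)"
proof -
  have "\<forall>m. \<exists>N. \<forall>k\<ge>N. \<forall>M b t. (\<forall>j\<le>m. \<bar>b j\<bar> \<le> M) \<longrightarrow>
      norm (\<Sum>j\<le>m. b j *\<^sub>R y j) - \<eta> / 2 ^ Suc m * M \<le> norm ((\<Sum>j\<le>m. b j *\<^sub>R y j) + t *\<^sub>R y k)"
    using \<open>\<eta> > 0\<close> by (intro allI eventually_small_norm_drop[OF subsums \<open>\<epsilon> > 0\<close> y_ge] divide_pos_pos) simp_all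
  then obtain N where "\<And>m k M b t. N m \<le> k \<Longrightarrow> \<forall>j\<le>m. \<bar>b j\<bar> \<le> M \<Longrightarrow>
      norm (\<Sum>j\<le>m. b j *\<^sub>R y j) - \<eta> / 2 ^ Suc m * M \<le> norm ((\<Sum>j\<le>m. b j *\<^sub>R y j) + t *\<^sub>R y k)"
    by (subst (asm) choice_iff) blast
  then show ?thesis
    by (rule that)
qed

lemma sum_strict_mono_spread:
  fixes r :: "nat \<Rightarrow> nat" and y :: "nat \<Rightarrow> 'a::real_vector"
  assumes "strict_mono r"
  shows "(\<Sum>i\<le>p. a i *\<^sub>R y (r i)) = (\<Sum>j\<le>r p. (if j \<in> range r then a (inv r j) else 0) *\<^sub>R y j)"
proof -
  have "(\<Sum>i\<le>p. a i *\<^sub>R y (r i)) = (\<Sum>i\<le>p. (if r i \<in> range r then a (inv r (r i)) else 0) *\<^sub>R y (r i))"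
    using strict_mono_imp_inj_on[OF assms] by simp
  also have "\<dots> = (\<Sum>j\<le>r p. (if j \<in> range r then a (inv r j) else 0) *\<^sub>R y j)"
    using assms by (rule sum_comp_strict_mono) simp
  finally show ?thesis .
qed

lemma exists_subseq_almost_monotone:
  fixes y :: "nat \<Rightarrow> 'a::real_normed_vector"
  assumes subsums: "\<And>B. finite B \<Longrightarrow> norm (sum y B) \<le> C"
    and "\<epsilon> > 0" and y_ge: "\<And>k. \<epsilon> \<le> norm (y k)" and "\<eta> > 0"
  obtains r where "strict_mono r"
    and "\<And>a M n. \<forall>i. \<bar>a i\<bar> \<le> M \<Longrightarrow>
      norm (\<Sum>i<n. a i *\<^sub>R y (r i)) - M * \<eta> / 2 ^ n \<le> norm (\<Sum>i<Suc n. a i *\<^sub>R y (r i))"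
proof -
  obtain N where N: "\<And>m k M b t. N m \<le> k \<Longrightarrow> \<forall>j\<le>m. \<bar>b j\<bar> \<le> M \<Longrightarrow>
      norm (\<Sum>j\<le>m. b j *\<^sub>R y j) - \<eta> / 2 ^ Suc m * M \<le> norm ((\<Sum>j\<le>m. b j *\<^sub>R y j) + t *\<^sub>R y k)"
    using exists_small_norm_drop_thresholds[OF subsums \<open>\<epsilon> > 0\<close> y_ge \<open>\<eta> > 0\<close>] by blast
  obtain r where "strict_mono r" and r: "\<And>n. N (r n) \<le> r (Suc n)"
    using exists_strict_mono_dominating[of N] by blast
  have "norm (\<Sum>i<n. a i *\<^sub>R y (r i)) - M * \<eta> / 2 ^ n \<le> norm (\<Sum>i<Suc n. a i *\<^sub>R y (r i))"
    if a: "\<forall>i. \<bar>a i\<bar> \<le> M" for a M n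
  proof -
    have "0 \<le> M"
      using a[rule_format, of 0] by simp
    show ?thesis
    proof (cases n)
      case 0
      have "norm (\<Sum>i<0. a i *\<^sub>R y (r i)) - M * \<eta> / 2 ^ 0 \<le> 0"
        using \<open>0 \<le> M\<close> \<open>\<eta> > 0\<close> by simp
      then show ?thesis
        unfolding 0 using norm_ge_zero by (rule order_trans)
    next
      case (Suc p)
      \<comment> \<open>The first \<open>n\<close> terms are a combination of \<open>y 0, \<dots>, y (r p)\<close>, to which \<open>y (r n)\<close>
        with \<open>r n \<ge> N (r p)\<close> is added.\<close>
      define b where "b j = (if j \<in> range r then a (inv r j) else 0)" for j
      have "(\<Sum>i<n. a i *\<^sub>R y (r i)) = (\<Sum>j\<le>r p. b j *\<^sub>R y j)"
        using sum_strict_mono_spread[OF \<open>strict_mono r\<close>] by (simp add: Suc lessThan_Suc_atMost b_def)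
      moreover have "\<forall>j\<le>r p. \<bar>b j\<bar> \<le> M"
        using a \<open>0 \<le> M\<close> by (simp add: b_def)
      ultimately have "norm (\<Sum>i<n. a i *\<^sub>R y (r i)) - \<eta> / 2 ^ Suc (r p) * M
          \<le> norm ((\<Sum>i<n. a i *\<^sub>R y (r i)) + a n *\<^sub>R y (r n))"
        using N[OF r[of p]] by (simp add: Suc)
      moreover have "\<eta> / 2 ^ Suc (r p) * M \<le> \<eta> / 2 ^ n * M"
        using seq_suble[OF \<open>strict_mono r\<close>, of p] \<open>\<eta> > 0\<close> \<open>0 \<le> M\<close>
        by (intro mult_right_mono divide_left_mono power_increasing) (auto simp: Suc)
      ultimately show ?thesis
        by (simp add: mult.commute mult.left_commute)
    qed
  qed
  with \<open>strict_mono r\<close> show ?thesis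
    by (rule that)
qed

lemma summable_scaleR_of_bounded_subsums:
  fixes z :: "nat \<Rightarrow> 'a::banach"
  assumes subsums: "\<And>B. finite B \<Longrightarrow> norm (sum z B) \<le> C" and "a \<longlonglongrightarrow> 0"
  shows "summable (\<lambda>i. a i *\<^sub>R z i)"
  unfolding summable_Cauchy
proof (intro allI impI)
  fix e :: real
  assume "e > 0"
  have "0 \<le> C"
    using subsums[of "{}"] by simp
  then have "e / (2 * C + 1) > 0"
    using \<open>e > 0\<close> by simp
  then obtain N where N: "\<forall>i\<ge>N. \<bar>a i\<bar> < e / (2 * C + 1)"
    using LIMSEQ_D[OF \<open>a \<longlonglongrightarrow> 0\<close>] by fastforce
  have "norm (\<Sum>i\<in>{m..<n}. a i *\<^sub>R z i) < e" if "N \<le> m" for m n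
  proof -
    have "norm (\<Sum>i\<in>{m..<n}. a i *\<^sub>R z i) \<le> 2 * C * (e / (2 * C + 1))"
      using N that \<open>e / (2 * C + 1) > 0\<close>
      by (intro norm_sum_scaleR_le_bounded_subsums[OF subsums]) (auto simp: less_imp_le)
    also have "\<dots> < e"
      using \<open>e > 0\<close> \<open>0 \<le> C\<close> by (simp add: field_simps)
    finally show ?thesis .
  qed
  then show "\<exists>N. \<forall>m\<ge>N. \<forall>n. norm (\<Sum>i = m..<n. a i *\<^sub>R z i) < e"
    by blast
qed

lemma abs_le_sup_norm:
  assumes "a \<in> c0_space"
  shows "\<bar>a n\<bar> \<le> sup_norm a"
proof -
  have "Bseq a"
    using assms by (auto simp: c0_space_def intro: convergent_imp_Bseq convergentI)
  then have "bdd_above (range (\<lambda>n. \<bar>a n\<bar>))"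
    by (auto simp: Bseq_def intro: bdd_aboveI2)
  then show ?thesis
    unfolding sup_norm_def by (rule cSUP_upper[OF UNIV_I])
qed

lemma sup_norm_nonneg: "a \<in> c0_space \<Longrightarrow> 0 \<le> sup_norm a"
  using abs_le_sup_norm[of a 0] by linarith

lemma sup_norm_le: "(\<And>n. \<bar>a n\<bar> \<le> K) \<Longrightarrow> sup_norm a \<le> K"
  unfolding sup_norm_def by (rule cSUP_least) auto

lemma abs_coeff_le_norm_suminf:
  fixes z :: "nat \<Rightarrow> 'a::banach"
  assumes z_ge: "\<And>k. \<epsilon> \<le> norm (z k)" and "0 \<le> K"
    and step: "\<And>n. norm (\<Sum>i<n. a i *\<^sub>R z i) - K / 2 ^ n \<le> norm (\<Sum>i<Suc n. a i *\<^sub>R z i)"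
    and "summable (\<lambda>i. a i *\<^sub>R z i)"
  shows "\<bar>a j\<bar> * \<epsilon> \<le> 2 * norm (\<Sum>i. a i *\<^sub>R z i) + 4 * K"
proof (rule LIMSEQ_le_const)
  define S where "S n = (\<Sum>i<n. a i *\<^sub>R z i)" for n
  show "(\<lambda>n. 2 * norm (S n) + 4 * K) \<longlonglongrightarrow> 2 * norm (\<Sum>i. a i *\<^sub>R z i) + 4 * K"
    unfolding S_def by (intro tendsto_intros summable_LIMSEQ \<open>summable _\<close>)
  have "\<bar>a j\<bar> * \<epsilon> \<le> 2 * norm (S n) + 4 * K" if "j < n" for n
  proof -
    have "\<bar>a j\<bar> * \<epsilon> \<le> norm (a j *\<^sub>R z j)"
      using z_ge[of j] by (simp add: mult_left_mono)
    also have "\<dots> = norm (S (Suc j) - S j)"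
      by (simp add: S_def)
    also have "\<dots> \<le> norm (S (Suc j)) + norm (S j)"
      by (rule norm_triangle_ineq4)
    also have "\<dots> \<le> (norm (S n) + 2 * K) + (norm (S n) + 2 * K)"
      using that step \<open>0 \<le> K\<close>
      by (intro add_mono le_add_of_geometric_drops[where s = "\<lambda>n. norm (S n)"]) (auto simp: S_def)
    finally show ?thesis
      by simp
  qed
  then show "\<exists>N. \<forall>n\<ge>N. \<bar>a j\<bar> * \<epsilon> \<le> 2 * norm (S n) + 4 * K"
    by (intro exI[of _ "Suc j"]) auto
qed

lemma copy_of_c0_of_almost_monotone:
  fixes z :: "nat \<Rightarrow> 'a::banach"
  assumes subsums: "\<And>B. finite B \<Longrightarrow> norm (sum z B) \<le> C"
    and "\<epsilon> > 0" and z_ge: "\<And>k. \<epsilon> \<le> norm (z k)"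
    and step: "\<And>a M n. \<forall>i. \<bar>a i\<bar> \<le> M \<Longrightarrow>
      norm (\<Sum>i<n. a i *\<^sub>R z i) - M * (\<epsilon> / 8) / 2 ^ n \<le> norm (\<Sum>i<Suc n. a i *\<^sub>R z i)"
  shows "contains_copy_of_c0 TYPE('a)"
proof -
  define T where "T a = (\<Sum>i. a i *\<^sub>R z i)" for a :: "nat \<Rightarrow> real"
  have summable: "summable (\<lambda>i. a i *\<^sub>R z i)" if "a \<in> c0_space" for a
    using that unfolding c0_space_def by (blast intro: summable_scaleR_of_bounded_subsums[OF subsums])
  have "T (\<lambda>n. a n + b n) = T a + T b" if "a \<in> c0_space" "b \<in> c0_space" for a b
    using suminf_add[OF summable[OF that(1)] summable[OF that(2)]] by (simp add: T_def scaleR_add_left)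
  moreover have "T (\<lambda>n. c * a n) = c *\<^sub>R T a" if "a \<in> c0_space" for a c
    using suminf_scaleR_right[OF summable[OF that], of c] by (simp add: T_def)
  moreover have "norm (T a) \<le> 2 * C * sup_norm a" if "a \<in> c0_space" for a
    unfolding T_def
  proof (rule LIMSEQ_le_const2[OF tendsto_norm[OF summable_LIMSEQ[OF summable[OF that]]]])
    show "\<exists>N. \<forall>n\<ge>N. norm (\<Sum>i<n. a i *\<^sub>R z i) \<le> 2 * C * sup_norm a"
      using abs_le_sup_norm[OF that] sup_norm_nonneg[OF that]
      by (intro exI allI impI norm_sum_scaleR_le_bounded_subsums[OF subsums]) auto
  qed
  moreover have "\<epsilon> / 4 * sup_norm a \<le> norm (T a)" if "a \<in> c0_space" for a
  proof -
    have "0 \<le> sup_norm a * (\<epsilon> / 8)"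
      using sup_norm_nonneg[OF that] \<open>\<epsilon> > 0\<close> by simp
    moreover have "norm (\<Sum>i<n. a i *\<^sub>R z i) - sup_norm a * (\<epsilon> / 8) / 2 ^ n
        \<le> norm (\<Sum>i<Suc n. a i *\<^sub>R z i)" for n
      using step abs_le_sup_norm[OF that] by blast
    ultimately have "\<bar>a j\<bar> * \<epsilon> \<le> 2 * norm (T a) + 4 * (sup_norm a * (\<epsilon> / 8))" for j
      unfolding T_def by (rule abs_coeff_le_norm_suminf[OF z_ge _ _ summable[OF that]])
    then have "sup_norm a \<le> (2 * norm (T a) + sup_norm a * \<epsilon> / 2) / \<epsilon>"
      using \<open>\<epsilon> > 0\<close> by (intro sup_norm_le) (simp add: pos_le_divide_eq mult.commute)
    then show ?thesis
      using \<open>\<epsilon> > 0\<close> by (simp add: field_simps)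
  qed
  ultimately show ?thesis
    unfolding contains_copy_of_c0_def using \<open>\<epsilon> > 0\<close>
    by (intro exI[of _ T] conjI ballI allI exI[of _ "\<epsilon> / 4"] exI[of _ "2 * C"]) auto
qed

lemma copy_of_c0_of_bounded_subsums:
  fixes y :: "nat \<Rightarrow> 'a::banach"
  assumes subsums: "\<And>B. finite B \<Longrightarrow> norm (sum y B) \<le> C"
    and "\<epsilon> > 0" and y_ge: "\<And>k. \<epsilon> \<le> norm (y k)"
  shows "contains_copy_of_c0 TYPE('a)"
proof -
  obtain r where "strict_mono r" and step: "\<And>a M n. \<forall>i. \<bar>a i\<bar> \<le> M \<Longrightarrow>
      norm (\<Sum>i<n. a i *\<^sub>R y (r i)) - M * (\<epsilon> / 8) / 2 ^ n \<le> norm (\<Sum>i<Suc n. a i *\<^sub>R y (r i))"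
    using exists_subseq_almost_monotone[OF subsums \<open>\<epsilon> > 0\<close> y_ge, of "\<epsilon> / 8"] \<open>\<epsilon> > 0\<close> by auto
  have "norm (sum (y \<circ> r) B) \<le> C" if "finite B" for B
    using subsums[of "r ` B"] that
    by (simp add: sum.reindex[OF strict_mono_imp_inj_on[OF \<open>strict_mono r\<close>]])
  then show ?thesis
    using \<open>\<epsilon> > 0\<close> y_ge step by (intro copy_of_c0_of_almost_monotone[of "y \<circ> r" C \<epsilon>]) auto
qed

section \<open>Series that are not unconditionally convergent\<close>

lemma exists_disjoint_blocks:
  assumes avoid: "\<forall>G. finite G \<longrightarrow> (\<exists>F. finite F \<and> F \<inter> G = {} \<and> P F)" and "finite G\<^sub>0"
  obtains B :: "nat \<Rightarrow> 'a set"
  where "\<And>n. finite (B n)" "\<And>n. P (B n)" "\<And>n. B n \<inter> G\<^sub>0 = {}" "disjoint_family B"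
proof -
  have "\<exists>U'. (finite U' \<and> G\<^sub>0 \<subseteq> U') \<and> U \<subseteq> U' \<and> P (U' - U)" if U: "finite U \<and> G\<^sub>0 \<subseteq> U" for U
  proof -
    from avoid U obtain F where "finite F" "F \<inter> U = {}" "P F"
      by blast
    moreover have "U \<union> F - U = F"
      using \<open>F \<inter> U = {}\<close> by blast
    ultimately show ?thesis
      using U by (metis Un_upper1 finite_Un le_supI1)
  qed
  from dependent_nat_choice[of "\<lambda>_ U. finite U \<and> G\<^sub>0 \<subseteq> U" "\<lambda>_ U U'. U \<subseteq> U' \<and> P (U' - U)", OF _ this]
  obtain U where U: "\<And>n. finite (U n) \<and> G\<^sub>0 \<subseteq> U n" "\<And>n. U n \<subseteq> U (Suc n)"
    and P: "\<And>n. P (U (Suc n) - U n)"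
    using \<open>finite G\<^sub>0\<close> by blast
  have "(U (Suc m) - U m) \<inter> (U (Suc n) - U n) = {}" if "m < n" for m n
    using lift_Suc_mono_le[of U, OF U(2), of "Suc m" n] that by auto
  then have "disjoint_family (\<lambda>n. U (Suc n) - U n)"
    unfolding disjoint_family_on_def by (metis inf_commute linorder_neqE_nat)
  moreover have "(U (Suc n) - U n) \<inter> G\<^sub>0 = {}" for n
    using U(1) by blast
  ultimately show ?thesis
    using U(1) P by (intro that[of "\<lambda>n. U (Suc n) - U n"]) auto
qed

lemma exists_far_blocks:
  fixes x :: "nat \<Rightarrow> 'a::banach"
  assumes "\<not> unconditionally_convergent x"
  obtains e where "e > 0" and "\<forall>G. finite G \<longrightarrow> (\<exists>F. finite F \<and> F \<inter> G = {} \<and> e \<le> norm (sum x F))"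
proof -
  obtain p where "bij p" and "\<not> summable (\<lambda>n. x (p n))"
    using assms unfolding unconditionally_convergent_def by blast
  then obtain e where "e > 0" and e: "\<forall>N. \<exists>m\<ge>N. \<exists>n. e \<le> norm (\<Sum>i\<in>{m..<n}. x (p i))"
    unfolding summable_Cauchy by (auto simp: not_less)
  have "\<exists>F. finite F \<and> F \<inter> G = {} \<and> e \<le> norm (sum x F)" if "finite G" for G
  proof -
    have "finite (p -` G)"
      using \<open>finite G\<close> \<open>bij p\<close> by (simp add: finite_vimageI bij_is_inj)
    then obtain N where N: "p -` G \<subseteq> {..<N}"
      using finite_nat_bounded by blast
    obtain m n where "N \<le> m" and mn: "e \<le> norm (\<Sum>i\<in>{m..<n}. x (p i))"
      using e by blast
    have "p ` {m..<n} \<inter> G = {}"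
      using N \<open>N \<le> m\<close> by fastforce
    moreover have "sum x (p ` {m..<n}) = (\<Sum>i\<in>{m..<n}. x (p i))"
      by (simp add: sum.reindex[OF inj_on_subset[OF bij_is_inj[OF \<open>bij p\<close>] subset_UNIV]])
    ultimately show ?thesis
      using mn by (intro exI[of _ "p ` {m..<n}"]) auto
  qed
  with \<open>e > 0\<close> show ?thesis
    using that by blast
qed

lemma tail_subsums_unbounded:
  fixes x :: "nat \<Rightarrow> 'a::banach"
  assumes "\<not> contains_copy_of_c0 TYPE('a)" and "\<not> unconditionally_convergent x"
  shows "\<exists>F. finite F \<and> F \<subseteq> {L..} \<and> C < norm (sum x F)"
proof (rule ccontr)
  assume "\<nexists>F. finite F \<and> F \<subseteq> {L..} \<and> C < norm (sum x F)"
  then have tail: "norm (sum x F) \<le> C" if "finite F" "F \<subseteq> {L..}" for F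
    using that by (simp add: not_less)
  obtain e where "e > 0" and far: "\<forall>G. finite G \<longrightarrow> (\<exists>F. finite F \<and> F \<inter> G = {} \<and> e \<le> norm (sum x F))"
    using exists_far_blocks[OF assms(2)] by metis
  obtain B :: "nat \<Rightarrow> nat set" where fin: "\<And>n. finite (B n)" and e: "\<And>n. e \<le> norm (sum x (B n))"
    and "\<And>n. B n \<inter> {..<L} = {}" and disj: "disjoint_family B"
    using exists_disjoint_blocks[OF far finite_lessThan[of L]] by blast
  then have tail_B: "\<Union> (B ` A) \<subseteq> {L..}" for A
    by fastforce
  have "norm (\<Sum>n\<in>A. sum x (B n)) \<le> C" if "finite A" for A
  proof -
    have "(\<Sum>n\<in>A. sum x (B n)) = sum x (\<Union> (B ` A))"
      using disj that fin by (subst sum.UNION_disjoint) (auto simp: disjoint_family_on_def)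
    then show ?thesis
      using tail[of "\<Union> (B ` A)"] tail_B that fin by simp
  qed
  then have "contains_copy_of_c0 TYPE('a)"
    using \<open>e > 0\<close> e by (rule copy_of_c0_of_bounded_subsums)
  with assms(1) show False ..
qed

section \<open>Cylinders in the Baire space\<close>

definition cylinder :: "(nat \<Rightarrow> nat) \<Rightarrow> nat \<Rightarrow> (nat \<Rightarrow> nat) set" where
  "cylinder s n = {f. \<forall>i<n. f i = s i}"

lemma self_in_cylinder [simp]: "s \<in> cylinder s n"
  by (simp add: cylinder_def)

lemma topspace_baire_space [simp]: "topspace baire_space = UNIV"
  by (simp add: baire_space_def)

lemma openin_cylinder: "openin baire_space (cylinder s n)"
proof -
  have "cylinder s n = PiE UNIV (\<lambda>i. if i < n then {s i} else UNIV)"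
    by (auto simp: cylinder_def PiE_iff split: if_splits)
  moreover have "finite {i. (if i < n then {s i} else UNIV) \<noteq> topspace (discrete_topology (UNIV :: nat set))}"
    by (rule finite_subset[of _ "{..<n}"]) auto
  ultimately show ?thesis
    unfolding baire_space_def by (simp add: openin_PiE_gen)
qed

lemma cylinder_subset_of_openin:
  assumes "openin baire_space V" and "s \<in> V"
  obtains n where "cylinder s n \<subseteq> V"
proof -
  obtain U where fin: "finite {i. U i \<noteq> topspace (discrete_topology (UNIV :: nat set))}"
    and "s \<in> PiE UNIV U" and "PiE UNIV U \<subseteq> V"
    using assms unfolding baire_space_def openin_product_topology_alt by auto
  obtain n where n: "{i. U i \<noteq> UNIV} \<subseteq> {..<n}"
    using finite_nat_bounded[OF fin] by auto
  have "cylinder s n \<subseteq> PiE UNIV U"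
  proof
    fix f assume "f \<in> cylinder s n"
    moreover have "U i = UNIV" if "\<not> i < n" for i
      using n that by blast
    ultimately have "f i \<in> U i" for i
      using \<open>s \<in> PiE UNIV U\<close> by (cases "i < n") (auto simp: cylinder_def PiE_iff)
    then show "f \<in> PiE UNIV U"
      by (simp add: PiE_UNIV_domain)
  qed
  with \<open>PiE UNIV U \<subseteq> V\<close> show ?thesis
    using that by blast
qed

lemma cylinder_subset_of_openin_subtopology:
  assumes "openin (subtopology baire_space D) U" and "s \<in> U"
  obtains n where "cylinder s n \<inter> D \<subseteq> U"
proof -
  obtain V where "openin baire_space V" and U: "U = V \<inter> D"
    using assms(1) unfolding openin_subtopology by blast
  moreover obtain n where "cylinder s n \<subseteq> V"
    using cylinder_subset_of_openin[OF \<open>openin baire_space V\<close>, of s] assms(2) U by blast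
  ultimately show ?thesis
    using that by blast
qed

lemma openin_subtopology_cylinder: "openin (subtopology baire_space D) (cylinder s n \<inter> D)"
  using openin_cylinder by (auto simp: openin_subtopology)

lemma closedin_subtopology_baire_space_Collect:
  assumes "\<And>d. d \<in> D \<Longrightarrow> \<not> P d \<Longrightarrow> \<exists>n. \<forall>e\<in>cylinder d n \<inter> D. \<not> P e"
  shows "closedin (subtopology baire_space D) {d \<in> D. P d}"
proof -
  have "openin (subtopology baire_space D) {d \<in> D. \<not> P d}"
  proof (subst openin_subopen, intro ballI)
    fix d assume "d \<in> {d \<in> D. \<not> P d}"
    then obtain n where "\<forall>e\<in>cylinder d n \<inter> D. \<not> P e"
      using assms by blast
    with \<open>d \<in> {d \<in> D. \<not> P d}\<close> show "\<exists>T. openin (subtopology baire_space D) T \<and> d \<in> T \<and> T \<subseteq> {d \<in> D. \<not> P d}"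
      by (intro exI[of _ "cylinder d n \<inter> D"]) (auto simp: openin_subtopology_cylinder)
  qed
  moreover have "topspace (subtopology baire_space D) - {d \<in> D. P d} = {d \<in> D. \<not> P d}"
    by auto
  ultimately show ?thesis
    by (simp add: closedin_def)
qed

lemma interior_of_subtopology_baire_space_eq_empty:
  assumes "\<And>s n. s \<in> D \<Longrightarrow> \<exists>d\<in>cylinder s n \<inter> D. d \<notin> A"
  shows "subtopology baire_space D interior_of A = {}"
proof (rule ccontr)
  assume "subtopology baire_space D interior_of A \<noteq> {}"
  then obtain s U where U: "openin (subtopology baire_space D) U" "s \<in> U" "U \<subseteq> A"
    unfolding interior_of_def by blast
  obtain n where "cylinder s n \<inter> D \<subseteq> U"
    using cylinder_subset_of_openin_subtopology[OF U(1,2)] by blast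
  moreover have "s \<in> D"
    using openin_subset[OF U(1)] U(2) by auto
  ultimately show False
    using assms[of s n] U(3) by blast
qed

lemma nowhere_dense_in_if_closedin:
  "closedin X A \<Longrightarrow> X interior_of A = {} \<Longrightarrow> nowhere_dense_in X A"
  unfolding nowhere_dense_in_def by (simp add: closure_of_closedin closedin_subset)

section \<open>Meagerness of the sets of bounded partial sums\<close>

definition admits_block_insertion :: "(nat \<Rightarrow> nat) set \<Rightarrow> bool" where
  "admits_block_insertion D \<longleftrightarrow> (\<forall>s\<in>D. \<forall>k. \<exists>L. \<forall>F. finite F \<and> F \<subseteq> {L..} \<longrightarrow>
     (\<exists>d\<in>cylinder s k \<inter> D. bij_betw d {k..<k + card F} F))"

lemma closedin_partial_sums_le:
  "closedin (subtopology baire_space D) {d \<in> D. \<forall>n. norm (\<Sum>i<n. x (d i)) \<le> M}"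
proof (rule closedin_subtopology_baire_space_Collect)
  fix d :: "nat \<Rightarrow> nat"
  assume "\<not> (\<forall>n. norm (\<Sum>i<n. x (d i)) \<le> M)"
  then obtain n where "M < norm (\<Sum>i<n. x (d i))"
    by (auto simp: not_le)
  moreover have "(\<Sum>i<n. x (e i)) = (\<Sum>i<n. x (d i))" if "e \<in> cylinder d n" for e
    using that by (simp add: cylinder_def)
  ultimately show "\<exists>n. \<forall>e\<in>cylinder d n \<inter> D. \<not> (\<forall>n. norm (\<Sum>i<n. x (e i)) \<le> M)"
    by (metis IntD1 not_le)
qed

lemma interior_of_partial_sums_le_eq_empty:
  fixes x :: "nat \<Rightarrow> 'a::real_normed_vector"
  assumes insertion: "admits_block_insertion D"
    and unbounded: "\<And>L C. \<exists>F. finite F \<and> F \<subseteq> {L..} \<and> C < norm (sum x F)"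
  shows "subtopology baire_space D interior_of {d \<in> D. \<forall>n. norm (\<Sum>i<n. x (d i)) \<le> M} = {}"
proof (rule interior_of_subtopology_baire_space_eq_empty)
  fix s k assume "s \<in> D"
  then obtain L where L: "\<forall>F. finite F \<and> F \<subseteq> {L..} \<longrightarrow> (\<exists>d\<in>cylinder s k \<inter> D. bij_betw d {k..<k + card F} F)"
    using insertion unfolding admits_block_insertion_def by blast
  obtain F where F: "finite F" "F \<subseteq> {L..}" "2 * M < norm (sum x F)"
    using unbounded by blast
  then obtain d where d: "d \<in> cylinder s k \<inter> D" and "bij_betw d {k..<k + card F} F"
    using L by blast
  then have "sum x F = (\<Sum>i<k + card F. x (d i)) - (\<Sum>i<k. x (d i))"
    by (simp add: sum.reindex_bij_betw[symmetric] sum_diff_nat_ivl flip: atLeast0LessThan)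
  then have "norm (sum x F) \<le> norm (\<Sum>i<k + card F. x (d i)) + norm (\<Sum>i<k. x (d i))"
    by (simp add: norm_triangle_ineq4)
  with F(3) have "\<not> (norm (\<Sum>i<k + card F. x (d i)) \<le> M \<and> norm (\<Sum>i<k. x (d i)) \<le> M)"
    by linarith
  with d show "\<exists>d\<in>cylinder s k \<inter> D. d \<notin> {d \<in> D. \<forall>n. norm (\<Sum>i<n. x (d i)) \<le> M}"
    by blast
qed

lemma nowhere_dense_partial_sums_le:
  fixes x :: "nat \<Rightarrow> 'a::real_normed_vector"
  assumes "admits_block_insertion D"
    and "\<And>L C. \<exists>F. finite F \<and> F \<subseteq> {L..} \<and> C < norm (sum x F)"
  shows "nowhere_dense_in (subtopology baire_space D) {d \<in> D. \<forall>n. norm (\<Sum>i<n. x (d i)) \<le> M}"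
  using closedin_partial_sums_le interior_of_partial_sums_le_eq_empty[OF assms]
  by (rule nowhere_dense_in_if_closedin)

lemma meager_in_bounded_partial_sums:
  fixes x :: "nat \<Rightarrow> 'a::real_normed_vector"
  assumes "admits_block_insertion D"
    and "\<And>L C. \<exists>F. finite F \<and> F \<subseteq> {L..} \<and> C < norm (sum x F)"
  shows "meager_in (subtopology baire_space D) {d \<in> D. bounded (range (\<lambda>n. \<Sum>i<n. x (d i)))}"
  unfolding meager_in_def
proof (intro conjI exI[of _ "range (\<lambda>M::nat. {d \<in> D. \<forall>n. norm (\<Sum>i<n. x (d i)) \<le> real M})"])
  show "\<forall>N\<in>range (\<lambda>M::nat. {d \<in> D. \<forall>n. norm (\<Sum>i<n. x (d i)) \<le> real M}).
      nowhere_dense_in (subtopology baire_space D) N"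
    using nowhere_dense_partial_sums_le[OF assms] by blast
  show "{d \<in> D. bounded (range (\<lambda>n. \<Sum>i<n. x (d i)))}
      \<subseteq> \<Union> (range (\<lambda>M::nat. {d \<in> D. \<forall>n. norm (\<Sum>i<n. x (d i)) \<le> real M}))"
  proof clarify
    fix d assume "d \<in> D" and "bounded (range (\<lambda>n. \<Sum>i<n. x (d i)))"
    then obtain K where "\<forall>n. norm (\<Sum>i<n. x (d i)) \<le> K"
      unfolding bounded_iff by blast
    then have "\<forall>n. norm (\<Sum>i<n. x (d i)) \<le> real (nat \<lceil>K\<rceil>)"
      by (meson order_trans real_nat_ceiling_ge)
    with \<open>d \<in> D\<close> show "d \<in> \<Union> (range (\<lambda>M::nat. {d \<in> D. \<forall>n. norm (\<Sum>i<n. x (d i)) \<le> real M}))"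
      by blast
  qed
qed auto

lemma bij_betw_shift:
  fixes d f :: "nat \<Rightarrow> 'a"
  assumes "bij_betw f A B" and "\<And>i. i \<in> A \<Longrightarrow> d (k + i) = f i"
  shows "bij_betw d ((+) k ` A) B"
proof -
  have "bij_betw ((+) k) A ((+) k ` A)"
    by simp
  moreover have "bij_betw (d \<circ> (+) k) A B"
    using bij_betw_cong[of A "d \<circ> (+) k" f B] assms by simp
  ultimately show ?thesis
    using bij_betw_comp_iff by blast
qed

lemma bij_betw_shifted_enumerate:
  assumes "finite F" and "\<And>i. i < card F \<Longrightarrow> d (k + i) = enumerate F i"
  shows "bij_betw d {k..<k + card F} F"
proof -
  have "bij_betw d ((+) k ` {0..<card F}) F"
    using finite_bij_enumerate[OF assms(1)] assms(2)
    by (intro bij_betw_shift) (auto simp: atLeast0LessThan)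
  then show ?thesis
    by (simp add: add.commute)
qed

lemma strict_mono_insert_block:
  assumes "strict_mono s" and "finite F" and F: "F \<subseteq> {s k..}"
  shows "strict_mono (\<lambda>i. if i < k then s i else if i < k + card F then enumerate F (i - k)
    else s k + \<Sum>F + i)" (is "strict_mono ?d")
proof -
  have enum_F: "enumerate F j \<in> F" if "j < card F" for j
    using finite_enumerate_in_set[OF \<open>finite F\<close>] that by simp
  have "?d i < ?d (Suc i)" for i
  proof -
    consider "Suc i < k" | "Suc i = k" | "k \<le> i" "Suc i < k + card F" | "k \<le> i" "Suc i = k + card F"
      | "k + card F \<le> i"
      by linarith
    then show ?thesis
    proof cases
      case 1
      then show ?thesis
        using \<open>strict_mono s\<close> by (simp add: strict_mono_Suc_iff)
    next
      case 2
      have "?d i = s i" "s i < s k"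
        using \<open>strict_mono s\<close> 2 by (simp_all add: strict_mono_less)
      moreover have "s k \<le> ?d (Suc i)"
        using enum_F[of 0] F 2 by auto
      ultimately show ?thesis
        by linarith
    next
      case 3
      then show ?thesis
        using finite_enumerate_mono[OF _ \<open>finite F\<close>, of "i - k" "Suc i - k"] by simp
    next
      case 4
      then have "enumerate F (i - k) \<le> \<Sum>F"
        using enum_F[of "i - k"] \<open>finite F\<close> by (intro member_le_sum) auto
      then show ?thesis
        using 4 by simp
    next
      case 5
      then show ?thesis
        by simp
    qed
  qed
  then show ?thesis
    by (simp add: strict_mono_Suc_iff)
qed

lemma admits_block_insertion_incr_seqs: "admits_block_insertion incr_seqs"
  unfolding admits_block_insertion_def
proof (intro ballI allI)
  fix s k assume "s \<in> incr_seqs"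
  have "\<exists>d\<in>cylinder s k \<inter> incr_seqs. bij_betw d {k..<k + card F} F"
    if "finite F" and "F \<subseteq> {s k..}" for F
  proof
    define d where "d i = (if i < k then s i else if i < k + card F then enumerate F (i - k)
      else s k + \<Sum>F + i)" for i
    show "d \<in> cylinder s k \<inter> incr_seqs"
      using strict_mono_insert_block[of s F k] \<open>s \<in> incr_seqs\<close> that
      by (simp add: cylinder_def incr_seqs_def d_def[abs_def])
    show "bij_betw d {k..<k + card F} F"
      using \<open>finite F\<close> by (intro bij_betw_shifted_enumerate) (simp_all add: d_def)
  qed
  then show "\<exists>L. \<forall>F. finite F \<and> F \<subseteq> {L..} \<longrightarrow> (\<exists>d\<in>cylinder s k \<inter> incr_seqs. bij_betw d {k..<k + card F} F)"
    by blast
qed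

lemma bij_insert_block:
  fixes p d :: "nat \<Rightarrow> nat"
  assumes "inj p" and "finite F" and disj: "p ` {..<k} \<inter> F = {}"
    and d: "\<And>i. d i = (if i < k then p i else if i < k + card F then enumerate F (i - k)
      else enumerate (UNIV - (p ` {..<k} \<union> F)) (i - (k + card F)))"
  shows "bij d"
proof -
  define R where "R = UNIV - (p ` {..<k} \<union> F)"
  have "infinite R"
    unfolding R_def using \<open>finite F\<close> by (intro Diff_infinite_finite) auto
  have "bij_betw p {..<k} (p ` {..<k})"
    by (rule inj_on_imp_bij_betw[OF inj_on_subset[OF \<open>inj p\<close> subset_UNIV]])
  then have "bij_betw d {..<k} (p ` {..<k})"
    by (rule bij_betw_cong[THEN iffD1, rotated]) (simp add: d)
  moreover have "bij_betw d {k..<k + card F} F"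
    using \<open>finite F\<close> by (intro bij_betw_shifted_enumerate) (simp_all add: d)
  moreover have "bij_betw d ((+) (k + card F) ` UNIV) R"
    using bij_enumerate[OF \<open>infinite R\<close>] by (intro bij_betw_shift) (simp_all add: d R_def)
  then have "bij_betw d {k + card F..} R"
    using image_add_atLeast[of "k + card F" 0] by simp
  ultimately have "bij_betw d ({..<k} \<union> {k..<k + card F} \<union> {k + card F..}) (p ` {..<k} \<union> F \<union> R)"
    using disj by (intro bij_betw_combine) (auto simp: R_def)
  moreover have "{..<k} \<union> {k..<k + card F} \<union> {k + card F..} = UNIV" and "p ` {..<k} \<union> F \<union> R = UNIV"
    by (auto simp: R_def)
  ultimately show ?thesis
    by simp
qed

lemma admits_block_insertion_perms: "admits_block_insertion perms"
  unfolding admits_block_insertion_def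
proof (intro ballI allI)
  fix p k assume "p \<in> perms"
  then have "inj p"
    by (simp add: perms_def bij_is_inj)
  have "\<exists>d\<in>cylinder p k \<inter> perms. bij_betw d {k..<k + card F} F"
    if "finite F" and F: "F \<subseteq> {Suc (\<Sum>i<k. p i)..}" for F
  proof
    define d where "d i = (if i < k then p i else if i < k + card F then enumerate F (i - k)
      else enumerate (UNIV - (p ` {..<k} \<union> F)) (i - (k + card F)))" for i
    have "p i \<le> (\<Sum>i<k. p i)" if "i < k" for i
      using that by (intro member_le_sum) auto
    then have "p ` {..<k} \<inter> F = {}"
      using F by force
    then have "bij d"
      by (rule bij_insert_block[OF \<open>inj p\<close> \<open>finite F\<close> _ d_def])
    moreover have "d \<in> cylinder p k"
      by (simp add: cylinder_def d_def)
    ultimately show "d \<in> cylinder p k \<inter> perms"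
      by (simp add: perms_def)
    show "bij_betw d {k..<k + card F} F"
      using \<open>finite F\<close> by (intro bij_betw_shifted_enumerate) (simp_all add: d_def)
  qed
  then show "\<exists>L. \<forall>F. finite F \<and> F \<subseteq> {L..} \<longrightarrow> (\<exists>d\<in>cylinder p k \<inter> perms. bij_betw d {k..<k + card F} F)"
    by blast
qed

section \<open>The set of increasing sequences is not meager\<close>

lemma closedin_incr_seqs: "closedin baire_space incr_seqs"
proof -
  have "closedin (subtopology baire_space UNIV) {d \<in> UNIV. strict_mono d}"
  proof (rule closedin_subtopology_baire_space_Collect)
    fix d :: "nat \<Rightarrow> nat"
    assume "\<not> strict_mono d"
    then obtain n where "\<not> d n < d (Suc n)"
      by (auto simp: strict_mono_Suc_iff)
    have "\<not> strict_mono e" if "e \<in> cylinder d (Suc (Suc n))" for e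
    proof -
      have "e n = d n" "e (Suc n) = d (Suc n)"
        using that by (auto simp: cylinder_def)
      with \<open>\<not> d n < d (Suc n)\<close> show ?thesis
        by (metis strict_mono_Suc_iff)
    qed
    then show "\<exists>m. \<forall>e\<in>cylinder d m \<inter> UNIV. \<not> strict_mono e"
      by blast
  qed
  then show ?thesis
    by (simp add: incr_seqs_def)
qed

lemma completely_metrizable_space_baire_space: "completely_metrizable_space baire_space"
  unfolding baire_space_def
  by (auto simp: completely_metrizable_space_product_topology intro: completely_metrizable_space_discrete_topology)

lemma not_meager_in_topspace:
  assumes "completely_metrizable_space X" and "topspace X \<noteq> {}"
  shows "\<not> meager_in X (topspace X)"
proof
  assume "meager_in X (topspace X)"
  then obtain \<F> where "countable \<F>" and nd: "\<forall>N\<in>\<F>. nowhere_dense_in X N" and cover: "topspace X \<subseteq> \<Union>\<F>"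
    unfolding meager_in_def by blast
  have "X interior_of \<Union> ((closure_of) X ` \<F>) = {}"
  proof (rule Baire_category_alt)
    show "completely_metrizable_space X \<or> locally_compact_space X \<and> regular_space X"
      using assms(1) ..
    show "countable ((closure_of) X ` \<F>)"
      using \<open>countable \<F>\<close> by simp
    fix T assume "T \<in> (closure_of) X ` \<F>"
    then show "closedin X T \<and> X interior_of T = {}"
      using nd by (auto simp: nowhere_dense_in_def)
  qed
  moreover have "topspace X \<subseteq> \<Union> ((closure_of) X ` \<F>)"
  proof
    fix s assume "s \<in> topspace X"
    then obtain N where "N \<in> \<F>" and "s \<in> N"
      using cover by blast
    moreover have "N \<subseteq> topspace X"
      using nd \<open>N \<in> \<F>\<close> by (simp add: nowhere_dense_in_def)
    ultimately show "s \<in> \<Union> ((closure_of) X ` \<F>)"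
      using closure_of_subset by blast
  qed
  then have "X interior_of topspace X \<subseteq> X interior_of \<Union> ((closure_of) X ` \<F>)"
    by (rule interior_of_mono)
  ultimately show False
    using assms(2) by simp
qed

lemma not_meager_incr_seqs: "\<not> meager_in (subtopology baire_space incr_seqs) incr_seqs"
proof -
  have "completely_metrizable_space (subtopology baire_space incr_seqs)"
    by (rule completely_metrizable_space_closedin[OF completely_metrizable_space_baire_space closedin_incr_seqs])
  moreover have "id \<in> incr_seqs"
    by (simp add: incr_seqs_def strict_mono_def)
  ultimately show ?thesis
    using not_meager_in_topspace[of "subtopology baire_space incr_seqs"] by auto
qed

section \<open>Series obtained from a copy of \<open>c\<^sub>0\<close>\<close>

lemma indicator_in_c0_space:
  assumes "finite B"
  shows "indicator B \<in> c0_space"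
proof -
  obtain N where "B \<subseteq> {..<N}"
    using finite_nat_bounded[OF assms] by blast
  then have "\<forall>n\<ge>N. indicator B n = (0 :: real)"
    by (auto simp: indicator_def)
  then have "eventually (\<lambda>n. indicator B n = (0 :: real)) sequentially"
    unfolding eventually_sequentially by blast
  then show ?thesis
    unfolding c0_space_def by (intro CollectI tendsto_eventually)
qed

lemma not_unconditionally_convergent_if_norm_ge:
  assumes "m > 0" and "\<And>n. m \<le> norm (x n)"
  shows "\<not> unconditionally_convergent x"
proof
  assume "unconditionally_convergent x"
  then have "summable (\<lambda>n. x (id n))"
    using bij_id unfolding unconditionally_convergent_def by blast
  then have "summable x"
    by simp
  then have "x \<longlonglongrightarrow> 0"
    by (rule summable_LIMSEQ_zero)
  then obtain n where "norm (x n) < m"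
    using LIMSEQ_D[OF _ \<open>m > 0\<close>] by fastforce
  with assms(2)[of n] show False
    by simp
qed

lemma bounded_partial_sums_if_bounded_subsums:
  fixes s :: "nat \<Rightarrow> 'b" and x :: "'b \<Rightarrow> 'a::real_normed_vector"
  assumes "inj s" and subsums: "\<And>B. finite B \<Longrightarrow> norm (sum x B) \<le> C"
  shows "bounded (range (\<lambda>n. \<Sum>i<n. x (s i)))"
proof -
  have "norm (\<Sum>i<n. x (s i)) \<le> C" for n
  proof -
    have "norm (\<Sum>i<n. x (s i)) = norm (sum x (s ` {..<n}))"
      by (simp add: sum.reindex[OF inj_on_subset[OF \<open>inj s\<close> subset_UNIV]])
    also have "\<dots> \<le> C"
      by (intro subsums finite_imageI finite_lessThan)
    finally show ?thesis .
  qed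
  then show ?thesis
    unfolding bounded_iff by blast
qed

lemma linear_map_indicator_eq_sum:
  fixes T :: "(nat \<Rightarrow> real) \<Rightarrow> 'a::real_vector"
  assumes add: "\<forall>a\<in>c0_space. \<forall>b\<in>c0_space. T (\<lambda>n. a n + b n) = T a + T b"
    and scale: "\<forall>c. \<forall>a\<in>c0_space. T (\<lambda>n. c * a n) = c *\<^sub>R T a"
    and "finite B"
  shows "T (indicator B) = (\<Sum>n\<in>B. T (indicator {n}))"
  using \<open>finite B\<close>
proof (induction B rule: finite_induct)
  case empty
  have "T (\<lambda>n. 0 * indicator {} n) = 0 *\<^sub>R T (indicator {})"
    using scale indicator_in_c0_space[of "{}"] by blast
  then show ?case
    by simp
next
  case (insert b B)
  have "indicator (insert b B) = (\<lambda>n. indicator {b} n + indicator B n :: real)"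
    using insert(2) by (auto simp: indicator_def)
  moreover have "T (\<lambda>n. indicator {b} n + indicator B n) = T (indicator {b}) + T (indicator B)"
    using add indicator_in_c0_space[of "{b}"] indicator_in_c0_space[OF insert(1)] by blast
  ultimately show ?case
    using insert by simp
qed

lemma exists_series_with_bounded_subseries_sums:
  assumes "contains_copy_of_c0 TYPE('a::real_normed_vector)"
  obtains x :: "nat \<Rightarrow> 'a::real_normed_vector" where "\<not> unconditionally_convergent x"
    and "\<And>s :: nat \<Rightarrow> nat. inj s \<Longrightarrow> bounded (range (\<lambda>n. \<Sum>i<n. x (s i)))"
proof -
  obtain T :: "(nat \<Rightarrow> real) \<Rightarrow> 'a" and m M
    where add: "\<forall>a\<in>c0_space. \<forall>b\<in>c0_space. T (\<lambda>n. a n + b n) = T a + T b"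
      and scale: "\<forall>c. \<forall>a\<in>c0_space. T (\<lambda>n. c * a n) = c *\<^sub>R T a"
      and "m > 0" and bounds: "\<forall>a\<in>c0_space. m * sup_norm a \<le> norm (T a) \<and> norm (T a) \<le> M * sup_norm a"
    using assms unfolding contains_copy_of_c0_def by blast
  define x where "x n = T (indicator {n})" for n
  have T_indicator: "T (indicator B) = sum x B" if "finite B" for B
    unfolding x_def using add scale that by (rule linear_map_indicator_eq_sum)
  have x_ge: "m \<le> norm (x n)" for n
  proof -
    have "1 \<le> sup_norm (indicator {n} :: nat \<Rightarrow> real)"
      using abs_le_sup_norm[OF indicator_in_c0_space[of "{n}"], of n] by simp
    then have "m \<le> m * sup_norm (indicator {n})"
      using \<open>m > 0\<close> by simp
    also have "\<dots> \<le> norm (x n)"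
      using bounds indicator_in_c0_space[of "{n}"] by (simp add: x_def)
    finally show ?thesis .
  qed
  have subsums: "norm (sum x B) \<le> \<bar>M\<bar>" if "finite B" for B
  proof -
    have "0 \<le> sup_norm (indicator B :: nat \<Rightarrow> real)"
      by (rule sup_norm_nonneg[OF indicator_in_c0_space[OF that]])
    have "sup_norm (indicator B :: nat \<Rightarrow> real) \<le> 1"
      by (rule sup_norm_le) (simp add: indicator_def)
    have "norm (sum x B) = norm (T (indicator B))"
      by (simp add: T_indicator[OF that])
    also have "\<dots> \<le> M * sup_norm (indicator B)"
      using bounds indicator_in_c0_space[OF that] by blast
    also have "\<dots> \<le> \<bar>M\<bar> * sup_norm (indicator B)"
      using \<open>0 \<le> sup_norm (indicator B)\<close> by (rule mult_right_mono[OF abs_ge_self])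
    also have "\<dots> \<le> \<bar>M\<bar>"
      using \<open>sup_norm (indicator B) \<le> 1\<close> by (simp add: mult_left_le)
    finally show ?thesis .
  qed
  show ?thesis
    by (rule that[OF not_unconditionally_convergent_if_norm_ge[OF \<open>m > 0\<close> x_ge]
          bounded_partial_sums_if_bounded_subsums[OF _ subsums]])
qed

theorem mainTheorem5:
  shows "\<not> contains_copy_of_c0 TYPE('a::banach) \<longleftrightarrow>
    (\<forall>x :: nat \<Rightarrow> 'a. \<not> unconditionally_convergent x \<longrightarrow>
       meager_in (subtopology baire_space incr_seqs)
         {s \<in> incr_seqs. bounded (range (\<lambda>n. \<Sum>i<n. x (s i)))} \<and>
       meager_in (subtopology baire_space perms)
         {p \<in> perms. bounded (range (\<lambda>n. \<Sum>i<n. x (p i)))})"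
proof
  assume "\<not> contains_copy_of_c0 TYPE('a)"
  then have unbounded: "\<exists>F. finite F \<and> F \<subseteq> {L..} \<and> C < norm (sum x F)"
    if "\<not> unconditionally_convergent x" for x :: "nat \<Rightarrow> 'a" and L C
    using that by (rule tail_subsums_unbounded)
  show "\<forall>x :: nat \<Rightarrow> 'a. \<not> unconditionally_convergent x \<longrightarrow>
      meager_in (subtopology baire_space incr_seqs) {s \<in> incr_seqs. bounded (range (\<lambda>n. \<Sum>i<n. x (s i)))} \<and>
      meager_in (subtopology baire_space perms) {p \<in> perms. bounded (range (\<lambda>n. \<Sum>i<n. x (p i)))}"
    using meager_in_bounded_partial_sums[OF admits_block_insertion_incr_seqs unbounded]
      meager_in_bounded_partial_sums[OF admits_block_insertion_perms unbounded] by blast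
next
  assume meager: "\<forall>x :: nat \<Rightarrow> 'a. \<not> unconditionally_convergent x \<longrightarrow>
      meager_in (subtopology baire_space incr_seqs) {s \<in> incr_seqs. bounded (range (\<lambda>n. \<Sum>i<n. x (s i)))} \<and>
      meager_in (subtopology baire_space perms) {p \<in> perms. bounded (range (\<lambda>n. \<Sum>i<n. x (p i)))}"
  show "\<not> contains_copy_of_c0 TYPE('a)"
  proof
    assume "contains_copy_of_c0 TYPE('a)"
    then obtain x :: "nat \<Rightarrow> 'a" where "\<not> unconditionally_convergent x"
      and bounded: "\<And>s :: nat \<Rightarrow> nat. inj s \<Longrightarrow> bounded (range (\<lambda>n. \<Sum>i<n. x (s i)))"
      using exists_series_with_bounded_subseries_sums by blast
    with meager have "meager_in (subtopology baire_space incr_seqs)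
        {s \<in> incr_seqs. bounded (range (\<lambda>n. \<Sum>i<n. x (s i)))}"
      by blast
    also have "{s \<in> incr_seqs. bounded (range (\<lambda>n. \<Sum>i<n. x (s i)))} = incr_seqs"
      using bounded by (auto simp: incr_seqs_def strict_mono_imp_inj_on)
    finally show False
      using not_meager_incr_seqs by contradiction
  qed
qed

end
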